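(* Let $K$ be a non-empty compact Hausdorff space, and let $P\colon C(K)\to C(K)$ be a positive linear projection (i.e. $P^2=P$ and $Pf\ge 0$ whenever $f\ge 0$) with $P\mathbb{1}_K=\mathbb{1}_K$. Suppose there exists $\alpha\ge 0$ such that: (i) $\alpha\,\mathrm{id}_{C(K)}\le P$ (i.e. $Pf-\alpha f\ge 0$ for all $f\in C(K)_+$), and (ii) whenever $f\in C(K)$ satisfies $0\le M_f\le P$, then $\|f\|_\infty\le\alpha$. Then either $\alpha=0$ or $\alpha=1/n$ for some $n\in\mathbb{N}$.
   Context: $C(K)$ is the Banach lattice of real-valued continuous functions on $K$ with the pointwise order and sup norm; $\mathbb{1}_K$ is the constant function $1$. For $f\in C(K)$, $M_f\colon C(K)\to C(K)$ is the multiplication operator $M_f(g)=fg$. For operators $S,T$ on $C(K)$, $S\le T$ means $T-S$ is a positive operator. *)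

theory Defs
  imports "HOL-Analysis.Analysis"
begin

(* C(K) for compact K is modelled by the bounded continuous functions 'a =>C real
  (on a compact space every continuous function is bounded), with the sup norm. *)

definition nonneg_fun :: "('a::topological_space \<Rightarrow>\<^sub>C real) \<Rightarrow> bool" where
  "nonneg_fun f \<longleftrightarrow> (\<forall>x. 0 \<le> f x)"

definition positive_op :: "(('a::topological_space \<Rightarrow>\<^sub>C real) \<Rightarrow> ('a \<Rightarrow>\<^sub>C real)) \<Rightarrow> bool" where
  "positive_op T \<longleftrightarrow> (\<forall>f. nonneg_fun f \<longrightarrow> nonneg_fun (T f))"

definition op_le :: "(('a::topological_space \<Rightarrow>\<^sub>C real) \<Rightarrow> ('a \<Rightarrow>\<^sub>C real)) \<Rightarrow>
    (('a \<Rightarrow>\<^sub>C real) \<Rightarrow> ('a \<Rightarrow>\<^sub>C real)) \<Rightarrow> bool" where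
  "op_le S T \<longleftrightarrow> positive_op (\<lambda>g. T g - S g)"

definition mult_op :: "('a::topological_space \<Rightarrow>\<^sub>C real) \<Rightarrow> ('a \<Rightarrow>\<^sub>C real) \<Rightarrow> ('a \<Rightarrow>\<^sub>C real)" where
  "mult_op f g = Bcontfun (\<lambda>x. f x * g x)"

end

theory Submission
  imports Defs
begin

(* For alpha > 0: Kadison's inequality (P h)^2 <= P (h^2), combined with the faithfulness of P
  that follows from alpha id <= P, shows that the range of P is closed under squaring.  Consequently
  (P g) x depends only on g restricted to the fibre {y. (P g) y = (P g) x for all g}.  Disjoint
  Urysohn bumps at the points of a fibre show that a fibre has at most 1/alpha points.  Near a fibre
  F of maximal size n every fibre meets each bump exactly once; this yields, for the bump e at a
  point i of F, a multiplier 0 <= M_f <= P with (P e) i <= f i, so (P e) i <= alpha by (ii).  The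
  n bumps add up to 1 on F, whence 1 <= n alpha <= 1. *)

lemma apply_Bcontfun_compact:
  assumes "compact (UNIV :: 'a::topological_space set)" and "continuous_on UNIV f"
  shows "apply_bcontfun (Bcontfun f) = (f :: 'a \<Rightarrow> 'b::metric_space)"
  using assms by (intro Bcontfun_inverse)
    (auto simp: bcontfun_def intro: compact_imp_bounded compact_continuous_image)

lemma mult_op_apply [simp]: "apply_bcontfun (mult_op f g) x = f x * g x"
proof -
  have "norm (f y * g y) \<le> norm f * norm g" for y
    unfolding norm_mult by (intro mult_mono norm_bounded) auto
  then show ?thesis
    unfolding mult_op_def by (subst Bcontfun_inverse) (auto intro!: bcontfun_normI continuous_intros)
qed

lemma op_le_iff: "op_le S T \<longleftrightarrow> (\<forall>g. nonneg_fun g \<longrightarrow> (\<forall>x. S g x \<le> T g x))"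
  by (simp add: op_le_def positive_op_def nonneg_fun_def)

lemma sum_apply_bcontfun: "apply_bcontfun (sum f S) x = (\<Sum>i\<in>S. apply_bcontfun (f i) x)"
  by (induction S rule: infinite_finite_induct) auto

lemma normal_space_compact_t2:
  assumes "compact (UNIV :: 'a::t2_space set)"
  shows "normal_space (euclidean :: 'a topology)"
proof (rule compact_Hausdorff_or_regular_imp_normal_space)
  show "compact_space (euclidean :: 'a topology)"
    using assms by (simp add: compact_space_def)
  show "Hausdorff_space (euclidean :: 'a topology) \<or> regular_space euclidean"
    using hausdorff by (auto simp: Hausdorff_space_def disjnt_def)
qed

lemma Urysohn_bump_compact_t2:
  fixes z :: "'a::t2_space"
  assumes "compact (UNIV :: 'a set)" and "open V" and "z \<in> V"
  obtains b :: "'a \<Rightarrow>\<^sub>C real"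
  where "\<And>y. 0 \<le> b y" "\<And>y. b y \<le> 1" "b z = 1" "\<And>y. y \<notin> V \<Longrightarrow> b y = 0"
proof -
  obtain f where f: "continuous_map euclidean (top_of_set {0..1::real}) f"
    "f ` (- V) \<subseteq> {0}" "f ` {z} \<subseteq> {1}"
    using Urysohn_lemma[OF normal_space_compact_t2[OF assms(1)], of "- V" "{z}" 0 1] assms
    by (auto simp: closed_open disjnt_def)
  then have "continuous_on UNIV f" and range: "\<And>y. f y \<in> {0..1}"
    by (auto simp: continuous_map_in_subtopology)
  then show ?thesis
    using f(2,3) by (intro that[of "Bcontfun f"]) (auto simp: apply_Bcontfun_compact[OF assms(1)])
qed

lemma t2_finite_disjoint_neighbourhoods:
  fixes S :: "'a::t2_space set"
  assumes "finite S"
  obtains V where "\<And>z. z \<in> S \<Longrightarrow> open (V z)" "\<And>z. z \<in> S \<Longrightarrow> z \<in> V z" "disjoint_family_on V S"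
proof -
  have "\<exists>U W. a \<noteq> b \<longrightarrow> open U \<and> open W \<and> a \<in> U \<and> b \<in> W \<and> U \<inter> W = {}"
    for a b :: 'a
    by (metis hausdorff)
  then obtain U W :: "'a \<Rightarrow> 'a \<Rightarrow> 'a set" where UW: "\<And>a b. a \<noteq> b \<Longrightarrow>
      open (U a b) \<and> open (W a b) \<and> a \<in> U a b \<and> b \<in> W a b \<and> U a b \<inter> W a b = {}"
    by metis
  define V where "V z = (\<Inter>z'\<in>S - {z}. U z z' \<inter> W z' z)" for z
  show ?thesis
  proof
    show "open (V z)" for z
      unfolding V_def using assms UW by (intro open_INT) auto
    show "z \<in> V z" for z
      unfolding V_def using UW by (auto simp: eq_commute)
    show "disjoint_family_on V S"
    proof (unfold disjoint_family_on_def, intro ballI impI)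
      fix z z' assume "z \<in> S" "z' \<in> S" "z \<noteq> z'"
      then have "V z \<subseteq> U z z'" "V z' \<subseteq> W z z'"
        unfolding V_def by auto
      then show "V z \<inter> V z' = {}"
        using UW[OF \<open>z \<noteq> z'\<close>] by blast
    qed
  qed
qed

definition disjoint_bumps :: "'a set \<Rightarrow> ('a \<Rightarrow> 'a::topological_space \<Rightarrow>\<^sub>C real) \<Rightarrow> bool" where
  "disjoint_bumps S b \<longleftrightarrow> (\<forall>z\<in>S. (\<forall>w. 0 \<le> b z w \<and> b z w \<le> 1) \<and> b z z = 1) \<and>
     disjoint_family_on (\<lambda>z. {w. b z w \<noteq> 0}) S"

lemma disjoint_bumps_exist:
  fixes S :: "'a::t2_space set"
  assumes "compact (UNIV :: 'a set)" and "finite S"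
  obtains b where "disjoint_bumps S b"
proof -
  obtain V where V: "\<And>z. z \<in> S \<Longrightarrow> open (V z)" "\<And>z. z \<in> S \<Longrightarrow> z \<in> V z" "disjoint_family_on V S"
    using t2_finite_disjoint_neighbourhoods[OF assms(2)] by blast
  have "\<forall>z\<in>S. \<exists>c :: 'a \<Rightarrow>\<^sub>C real.
      (\<forall>w. 0 \<le> c w \<and> c w \<le> 1) \<and> c z = 1 \<and> (\<forall>w. w \<notin> V z \<longrightarrow> c w = 0)"
    using Urysohn_bump_compact_t2[OF assms(1) V(1,2)] by metis
  from bchoice[OF this] obtain b :: "'a \<Rightarrow> 'a \<Rightarrow>\<^sub>C real" where
    b: "\<forall>z\<in>S. (\<forall>w. 0 \<le> b z w \<and> b z w \<le> 1) \<and> b z z = 1 \<and>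
      (\<forall>w. w \<notin> V z \<longrightarrow> b z w = 0)" ..
  have "{w. b z w \<noteq> 0} \<subseteq> V z" if "z \<in> S" for z
    using b that by auto
  with V(3) have "disjoint_family_on (\<lambda>z. {w. b z w \<noteq> 0}) S"
    unfolding disjoint_family_on_def by blast
  with b show ?thesis
    by (intro that[of b]) (simp add: disjoint_bumps_def)
qed

lemma sum_eq_if_disjoint_support:
  fixes b :: "'i \<Rightarrow> 'a \<Rightarrow> 'b::comm_monoid_add"
  assumes "finite S" and "disjoint_family_on (\<lambda>i. {w. b i w \<noteq> 0}) S" and "i \<in> S" and "b i w \<noteq> 0"
  shows "(\<Sum>j\<in>S. b j w) = b i w"
proof -
  have "(\<Sum>j\<in>S. b j w) = (\<Sum>j\<in>{i}. b j w)"
    using assms by (intro sum.mono_neutral_right) (auto simp: disjoint_family_on_def)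
  then show ?thesis by simp
qed

lemma sum_disjoint_bumps_le_one:
  assumes "finite S" and "disjoint_bumps S b"
  shows "(\<Sum>z\<in>S. b z w) \<le> 1"
proof (cases "\<exists>z\<in>S. b z w \<noteq> 0")
  case True
  then obtain z where "z \<in> S" "b z w \<noteq> 0" by blast
  with assms show ?thesis
    by (subst sum_eq_if_disjoint_support[of S b z]) (auto simp: disjoint_bumps_def)
qed simp

lemma sum_disjoint_bumps_eq_one:
  assumes "finite S" and "disjoint_bumps S b" and "z \<in> S"
  shows "(\<Sum>j\<in>S. b j z) = 1"
  using assms sum_eq_if_disjoint_support[of S b z z] by (simp add: disjoint_bumps_def)

lemma inter_eq_singleton_if_meets_disjoint_family:
  assumes "finite F" and "card F \<le> card Z" and "disjoint_family_on V Z"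
    and "\<And>j. j \<in> Z \<Longrightarrow> F \<inter> V j \<noteq> {}" and "i \<in> Z" and "y \<in> F \<inter> V i"
  shows "F \<inter> V i = {y}"
proof -
  obtain w where w: "\<And>j. j \<in> Z \<Longrightarrow> w j \<in> F \<inter> V j" and "w i = y"
  proof -
    have "\<forall>j\<in>Z. \<exists>u. u \<in> F \<inter> V j"
      using assms(4) by blast
    from bchoice[OF this] obtain w' where "\<forall>j\<in>Z. w' j \<in> F \<inter> V j" ..
    with assms(6) show thesis
      by (intro that[of "w'(i := y)"]) auto
  qed
  have "inj_on w Z"
    using w assms(3) by (fastforce simp: inj_on_def disjoint_family_on_def)
  then have "card (w ` Z) = card Z"
    by (rule card_image)
  moreover have "w ` Z \<subseteq> F"
    using w by blast
  ultimately have "w ` Z = F"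
    using assms(1,2) card_mono[OF assms(1), of "w ` Z"] by (intro card_subset_eq) simp_all
  then show ?thesis
    using w \<open>w i = y\<close> assms(3,5,6) by (fastforce simp: disjoint_family_on_def)
qed

lemma compact_positive_dominates_constant:
  fixes H :: "'a::topological_space \<Rightarrow> real"
  assumes "compact C" and "continuous_on C H" and "\<And>w. w \<in> C \<Longrightarrow> 0 < H w"
  obtains K where "0 \<le> K" and "\<And>w. w \<in> C \<Longrightarrow> B \<le> K * H w"
proof (cases "C = {}")
  case False
  then obtain w0 where "w0 \<in> C" and min: "\<And>w. w \<in> C \<Longrightarrow> H w0 \<le> H w"
    using continuous_attains_inf[OF assms(1) _ assms(2)] by blast
  then have pos: "0 < H w0"
    using assms(3) by blast
  show ?thesis
  proof
    show "0 \<le> max 0 B / H w0"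
      using pos by simp
    fix w assume "w \<in> C"
    have "B \<le> max 0 B / H w0 * H w0"
      using pos by simp
    also have "\<dots> \<le> max 0 B / H w0 * H w"
      using pos min[OF \<open>w \<in> C\<close>] by (intro mult_left_mono) auto
    finally show "B \<le> max 0 B / H w0 * H w" .
  qed
qed (use that in blast)

locale positive_unital_projection =
  fixes P :: "('a::topological_space \<Rightarrow>\<^sub>C real) \<Rightarrow> ('a \<Rightarrow>\<^sub>C real)"
  assumes linear: "linear P"
    and idempotent: "\<And>f. P (P f) = P f"
    and positive: "positive_op P"
    and unital: "P (const_bcontfun 1) = const_bcontfun 1"
begin

lemmas P_add = linear_add[OF linear]
  and P_diff = linear_diff[OF linear]
  and P_scaleR = linear_scale[OF linear]
  and P_sum = linear_sum[OF linear]

lemma P_nonneg: "nonneg_fun g \<Longrightarrow> 0 \<le> P g x"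
  using positive by (simp add: positive_op_def nonneg_fun_def)

lemma P_mono:
  fixes f g :: "'a \<Rightarrow>\<^sub>C real"
  shows "(\<And>y. f y \<le> g y) \<Longrightarrow> P f x \<le> P g x"
  using P_nonneg[of "g - f" x] by (simp add: P_diff nonneg_fun_def)

lemma P_const: "P (const_bcontfun c) = const_bcontfun c"
proof -
  have "const_bcontfun c = c *\<^sub>R (const_bcontfun 1 :: 'a \<Rightarrow>\<^sub>C real)"
    by (rule bcontfun_eqI) simp
  then show ?thesis
    by (simp add: P_scaleR unital)
qed

text \<open>Kadison's inequality: expand \<open>0 \<le> P ((h - c)\<^sup>2)\<close> at the constant \<open>c = P h x\<close>.\<close>
lemma P_square_ge: "(P h x)\<^sup>2 \<le> P (mult_op h h) x"
proof -
  define c where "c = P h x"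
  have "mult_op (h - const_bcontfun c) (h - const_bcontfun c)
      = mult_op h h - (2 * c) *\<^sub>R h + const_bcontfun (c * c)"
    by (rule bcontfun_eqI) (simp add: algebra_simps)
  moreover have "0 \<le> P (mult_op (h - const_bcontfun c) (h - const_bcontfun c)) x"
    by (rule P_nonneg) (simp add: nonneg_fun_def)
  ultimately show ?thesis
    by (simp add: P_add P_diff P_scaleR P_const c_def power2_eq_square)
qed

end

locale lower_bounded_projection = positive_unital_projection P
  for P :: "('a::t2_space \<Rightarrow>\<^sub>C real) \<Rightarrow> ('a \<Rightarrow>\<^sub>C real)" +
  fixes \<alpha> :: real
  assumes compact_UNIV: "compact (UNIV :: 'a set)"
    and alpha_pos: "0 < \<alpha>"
    and lower_bound: "op_le (\<lambda>g. \<alpha> *\<^sub>R g) P"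
begin

lemma P_ge_alpha: "nonneg_fun g \<Longrightarrow> \<alpha> * g x \<le> P g x"
  using lower_bound by (simp add: op_le_iff)

text \<open>The defect \<open>d\<close> in Kadison's inequality is nonnegative with \<open>P d = 0\<close>; as \<open>\<alpha> d \<le> P d\<close>
  it vanishes.\<close>
lemma P_square_of_range: "P (mult_op (P k) (P k)) = mult_op (P k) (P k)"
proof -
  define h where "h = P k"
  define d where "d = P (mult_op h h) - mult_op h h"
  have d_nonneg: "nonneg_fun d"
    using P_square_ge[of h] by (simp add: d_def h_def idempotent nonneg_fun_def power2_eq_square)
  have "P d = 0"
    by (simp add: d_def P_diff idempotent)
  then have "d y = 0" for y
    using P_ge_alpha[OF d_nonneg, of y] d_nonneg alpha_pos
    by (simp add: nonneg_fun_def mult_le_0_iff eq_iff)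
  then show ?thesis
    unfolding h_def[symmetric] by (intro bcontfun_eqI) (simp add: d_def)
qed

definition fibre :: "'a \<Rightarrow> 'a set" where
  "fibre x = {y. \<forall>g. P g y = P g x}"

lemma mem_fibre_self: "x \<in> fibre x"
  by (simp add: fibre_def)

lemma P_eq_on_fibre: "y \<in> fibre x \<Longrightarrow> P g y = P g x"
  by (simp add: fibre_def)

lemma null_function_outside_fibre:
  assumes "y \<notin> fibre x"
  obtains q where "nonneg_fun q" and "0 < q y" and "P q x = 0"
proof -
  obtain k where "P k y \<noteq> P k x"
    using assms by (auto simp: fibre_def)
  define h where "h = P (k - const_bcontfun (P k x))"
  have h_apply: "h w = P k w - P k x" for w
    by (simp add: h_def P_diff P_const)
  show ?thesis
  proof
    show "nonneg_fun (mult_op h h)"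
      by (simp add: nonneg_fun_def)
    show "0 < mult_op h h y"
      using \<open>P k y \<noteq> P k x\<close> by (simp add: h_apply flip: power2_eq_square)
    show "P (mult_op h h) x = 0"
      unfolding h_def P_square_of_range by (simp flip: h_def add: h_apply)
  qed
qed

lemma null_function_on_compact:
  assumes "compact C" and "C \<inter> fibre x = {}"
  obtains H where "nonneg_fun H" and "\<And>w. w \<in> C \<Longrightarrow> 0 < H w" and "P H x = 0"
proof -
  have "\<forall>y\<in>C. \<exists>q. nonneg_fun q \<and> 0 < q y \<and> P q x = 0"
  proof
    fix y assume "y \<in> C"
    with assms(2) have "y \<notin> fibre x" by blast
    then obtain q where "nonneg_fun q" "0 < q y" "P q x = 0"
      by (rule null_function_outside_fibre)
    then show "\<exists>q. nonneg_fun q \<and> 0 < q y \<and> P q x = 0" by blast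
  qed
  from bchoice[OF this] obtain q :: "'a \<Rightarrow> 'a \<Rightarrow>\<^sub>C real"
    where q: "\<forall>y\<in>C. nonneg_fun (q y) \<and> 0 < q y y \<and> P (q y) x = 0" ..
  have "open {w. 0 < q y w}" for y
    by (intro open_Collect_less) auto
  moreover have "C \<subseteq> (\<Union>y\<in>C. {w. 0 < q y w})"
    using q by auto
  ultimately obtain F where F: "F \<subseteq> C" "finite F" "C \<subseteq> (\<Union>y\<in>F. {w. 0 < q y w})"
    by (rule compactE_image[OF assms(1)])
  show ?thesis
  proof
    have "y \<in> F \<Longrightarrow> nonneg_fun (q y)" for y
      using F(1) q by blast
    then show "nonneg_fun (sum q F)"
      by (simp add: nonneg_fun_def sum_apply_bcontfun sum_nonneg)
    show "0 < sum q F w" if "w \<in> C" for w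
    proof -
      obtain y where y: "y \<in> F" "0 < q y w"
        using F(3) \<open>w \<in> C\<close> by blast
      have "q y w \<le> (\<Sum>y\<in>F. q y w)"
        using F(1,2) q y(1) by (intro member_le_sum) (auto simp: nonneg_fun_def)
      with y show ?thesis
        by (simp add: sum_apply_bcontfun)
    qed
    show "P (sum q F) x = 0"
      using F(1) q by (auto simp: P_sum sum_apply_bcontfun intro: sum.neutral)
  qed
qed

lemma abs_P_le_if_dominated:
  fixes g :: "'a \<Rightarrow>\<^sub>C real"
  assumes "P H x = 0" and "\<And>w. \<bar>g w\<bar> \<le> \<epsilon> + K * H w"
  shows "\<bar>P g x\<bar> \<le> \<epsilon>"
proof -
  define B where "B = const_bcontfun \<epsilon> + K *\<^sub>R H"
  have "g w \<le> B w" and "(- B) w \<le> g w" for w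
    using assms(2)[of w] by (auto simp: B_def abs_le_iff)
  then have "P g x \<le> P B x" and "P (- B) x \<le> P g x"
    by (auto intro: P_mono)
  moreover have "P B x = \<epsilon>"
    by (simp add: B_def P_add P_scaleR P_const assms(1))
  ultimately show ?thesis
    by (simp add: linear_neg[OF linear])
qed

text \<open>For \<open>\<epsilon> > 0\<close> the compact set where \<open>\<bar>g\<bar> \<ge> \<epsilon>\<close> misses the fibre, so a multiple of a
  nonnegative function killed by \<open>P\<close> at \<open>x\<close> dominates \<open>\<bar>g\<bar> - \<epsilon>\<close>.\<close>
lemma P_eq_zero_if_vanishes_on_fibre:
  fixes g :: "'a \<Rightarrow>\<^sub>C real"
  assumes "\<And>y. y \<in> fibre x \<Longrightarrow> g y = 0"
  shows "P g x = 0"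
proof -
  have "\<bar>P g x\<bar> \<le> 0 + \<epsilon>" if "0 < \<epsilon>" for \<epsilon>
  proof -
    define C where "C = {y. \<epsilon> \<le> \<bar>g y\<bar>}"
    have "closed C"
      unfolding C_def by (intro closed_Collect_le continuous_intros) auto
    then have "compact C"
      using compact_Int_closed[OF compact_UNIV] by simp
    moreover have "C \<inter> fibre x = {}"
      using assms \<open>0 < \<epsilon>\<close> by (auto simp: C_def)
    ultimately obtain H where H: "nonneg_fun H" "\<And>w. w \<in> C \<Longrightarrow> 0 < H w" "P H x = 0"
      by (rule null_function_on_compact) blast
    obtain K where "0 \<le> K" and K: "\<And>w. w \<in> C \<Longrightarrow> norm g \<le> K * H w"
      by (rule compact_positive_dominates_constant[of C "apply_bcontfun H"])
        (use \<open>compact C\<close> H(2) in auto)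
    have "\<bar>g w\<bar> \<le> \<epsilon> + K * H w" for w
    proof (cases "w \<in> C")
      case True
      then show ?thesis
        using norm_bounded[of g w] K[OF True] \<open>0 < \<epsilon>\<close> by simp
    next
      case False
      moreover have "0 \<le> K * H w"
        using H(1) \<open>0 \<le> K\<close> by (simp add: nonneg_fun_def)
      ultimately show ?thesis
        by (simp add: C_def)
    qed
    then show ?thesis
      by (intro abs_P_le_if_dominated[OF H(3)]) simp
  qed
  then have "\<bar>P g x\<bar> \<le> 0"
    by (rule field_le_epsilon)
  then show ?thesis
    by simp
qed

lemma P_eq_if_eq_on_fibre:
  fixes f g :: "'a \<Rightarrow>\<^sub>C real"
  assumes "\<And>y. y \<in> fibre x \<Longrightarrow> f y = g y"
  shows "P f x = P g x"
  using P_eq_zero_if_vanishes_on_fibre[of x "f - g"] assms by (simp add: P_diff)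

lemma card_mult_alpha_le_one:
  assumes "finite S" and "S \<subseteq> fibre x"
  shows "real (card S) * \<alpha> \<le> 1"
proof -
  obtain b where b: "disjoint_bumps S b"
    using disjoint_bumps_exist[OF compact_UNIV assms(1)] .
  have "real (card S) * \<alpha> = (\<Sum>z\<in>S. \<alpha> * b z z)"
    using b by (simp add: disjoint_bumps_def)
  also have "\<dots> \<le> (\<Sum>z\<in>S. P (b z) z)"
    using b by (intro sum_mono P_ge_alpha) (simp add: disjoint_bumps_def nonneg_fun_def)
  also have "\<dots> = P (sum b S) x"
    using assms(2) unfolding P_sum sum_apply_bcontfun by (intro sum.cong) (auto simp: P_eq_on_fibre)
  also have "\<dots> \<le> P (const_bcontfun 1) x"
    using sum_disjoint_bumps_le_one[OF assms(1) b] by (intro P_mono) (simp add: sum_apply_bcontfun)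
  finally show ?thesis
    by (simp add: unital)
qed

lemma finite_fibre: "finite (fibre x)"
proof (rule ccontr)
  assume "infinite (fibre x)"
  then obtain S where S: "finite S" "card S = nat \<lceil>1 / \<alpha>\<rceil> + 1" "S \<subseteq> fibre x"
    using infinite_arbitrarily_large by metis
  have "1 / \<alpha> < real (card S)"
    using S(2) real_nat_ceiling_ge[of "1 / \<alpha>"] by simp
  then have "1 < real (card S) * \<alpha>"
    using alpha_pos by (simp add: field_simps)
  with card_mult_alpha_le_one[OF S(1,3)] show False
    by simp
qed

lemma exists_fibre_of_max_card: "\<exists>x0. \<forall>x. card (fibre x) \<le> card (fibre x0)"
proof -
  have "card (fibre x) < nat \<lceil>1 / \<alpha>\<rceil> + 1" for x
  proof -
    have "real (card (fibre x)) \<le> 1 / \<alpha>"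
      using card_mult_alpha_le_one[OF finite_fibre order_refl] alpha_pos by (simp add: field_simps)
    then show ?thesis
      by linarith
  qed
  then show ?thesis
    using ex_has_greatest_nat[of "\<lambda>_. True" _ "\<lambda>x. card (fibre x)"] by blast
qed

lemma P_mult_le_if_isolated:
  fixes e g :: "'a \<Rightarrow>\<^sub>C real"
  assumes "\<And>w. 0 \<le> e w \<and> e w \<le> 1" and "nonneg_fun g"
    and "\<And>u. u \<in> fibre y \<Longrightarrow> u \<noteq> y \<Longrightarrow> e u = 0"
  shows "P e y * g y \<le> P g y"
proof -
  have "P e y * g y = P (g y *\<^sub>R e) y"
    by (simp add: P_scaleR)
  also have "\<dots> = P (mult_op g e) y"
  proof (rule P_eq_if_eq_on_fibre)
    fix u assume "u \<in> fibre y"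
    with assms(3) show "(g y *\<^sub>R e) u = mult_op g e u"
      by (cases "u = y") auto
  qed
  also have "\<dots> \<le> P g y"
    using assms(1,2) by (intro P_mono) (simp add: nonneg_fun_def mult_left_le)
  finally show ?thesis .
qed

lemma mult_op_below_P_exists:
  fixes e :: "'a \<Rightarrow>\<^sub>C real"
  assumes "open U" and "i \<in> U"
    and dominated: "\<And>y g. y \<in> U \<Longrightarrow> nonneg_fun g \<Longrightarrow> P e y * g y \<le> P g y"
  obtains f where "op_le (\<lambda>g. 0) (mult_op f)" and "op_le (mult_op f) P" and "P e i \<le> f i"
proof -
  obtain k :: "'a \<Rightarrow>\<^sub>C real"
    where k: "\<And>y. 0 \<le> k y" "\<And>y. k y \<le> 1" "k i = 1" "\<And>y. y \<notin> U \<Longrightarrow> k y = 0"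
    using Urysohn_bump_compact_t2[OF compact_UNIV assms(1,2)] by blast
  define f where "f = Bcontfun (\<lambda>y. \<alpha> + k y * max 0 (P e y - \<alpha>))"
  have f_apply: "f y = \<alpha> + k y * max 0 (P e y - \<alpha>)" for y
    unfolding f_def by (subst apply_Bcontfun_compact[OF compact_UNIV]) (auto intro!: continuous_intros)
  have f_cases: "f y \<le> \<alpha> \<or> (y \<in> U \<and> f y \<le> P e y)" for y
  proof (cases "y \<in> U")
    case True
    have "k y * max 0 (P e y - \<alpha>) \<le> max 0 (P e y - \<alpha>)"
      using k(1,2)[of y] by (intro mult_left_le_one_le) auto
    with True show ?thesis
      by (auto simp: f_apply)
  qed (simp add: f_apply k(4))
  show ?thesis
  proof
    show "op_le (\<lambda>g. 0) (mult_op f)"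
      using alpha_pos k(1) by (simp add: op_le_iff nonneg_fun_def f_apply)
    show "op_le (mult_op f) P"
      unfolding op_le_iff
    proof (intro allI impI)
      fix g :: "'a \<Rightarrow>\<^sub>C real" and y assume g: "nonneg_fun g"
      then have "0 \<le> g y"
        by (simp add: nonneg_fun_def)
      from f_cases[of y] show "mult_op f g y \<le> P g y"
      proof
        assume "f y \<le> \<alpha>"
        then have "f y * g y \<le> \<alpha> * g y"
          using \<open>0 \<le> g y\<close> by (rule mult_right_mono)
        with P_ge_alpha[OF g] show ?thesis
          by (simp add: order_trans)
      next
        assume "y \<in> U \<and> f y \<le> P e y"
        then have "f y * g y \<le> P e y * g y" and "y \<in> U"
          using \<open>0 \<le> g y\<close> by (auto intro: mult_right_mono)
        with dominated[OF \<open>y \<in> U\<close> g] show ?thesis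
          by simp
      qed
    qed
    show "P e i \<le> f i"
      by (simp add: f_apply k(3))
  qed
qed

text \<open>Near a point of a fibre of maximal cardinality, every fibre meets each bump
  exactly once, so a single bump is isolated on it.\<close>
lemma bump_locally_dominated:
  assumes max: "\<And>x. card (fibre x) \<le> card (fibre x0)"
    and b: "disjoint_bumps (fibre x0) b" and "i \<in> fibre x0"
  obtains U where "open U" and "i \<in> U"
    and "\<And>y g. y \<in> U \<Longrightarrow> nonneg_fun g \<Longrightarrow> P (b i) y * g y \<le> P g y"
proof
  let ?Z = "fibre x0"
  define U where "U = {y. 0 < b i y} \<inter> (\<Inter>j\<in>?Z. {y. 0 < P (b j) y})"
  have "open {y. 0 < P (b j) y}" for j
    by (intro open_Collect_less) auto
  then show "open U"
    unfolding U_def using finite_fibre by (intro open_Int open_INT open_Collect_less) auto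
  have "0 < P (b j) i" if "j \<in> ?Z" for j
  proof -
    have "\<alpha> * b j j \<le> P (b j) j"
      using b that by (intro P_ge_alpha) (simp add: disjoint_bumps_def nonneg_fun_def)
    moreover have "P (b j) i = P (b j) j"
      using \<open>i \<in> ?Z\<close> that by (simp add: P_eq_on_fibre)
    ultimately show ?thesis
      using b that alpha_pos by (simp add: disjoint_bumps_def)
  qed
  then show "i \<in> U"
    using b \<open>i \<in> ?Z\<close> by (simp add: U_def disjoint_bumps_def)
  fix y and g :: "'a \<Rightarrow>\<^sub>C real" assume "y \<in> U" and g: "nonneg_fun g"
  have meets: "fibre y \<inter> {w. b j w \<noteq> 0} \<noteq> {}" if "j \<in> ?Z" for j
  proof
    assume "fibre y \<inter> {w. b j w \<noteq> 0} = {}"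
    then have "P (b j) y = 0"
      by (intro P_eq_zero_if_vanishes_on_fibre) blast
    with \<open>y \<in> U\<close> that show False
      by (auto simp: U_def)
  qed
  have "fibre y \<inter> {w. b i w \<noteq> 0} = {y}"
    using b \<open>i \<in> ?Z\<close> \<open>y \<in> U\<close> max[of y] meets
    by (intro inter_eq_singleton_if_meets_disjoint_family[where Z = ?Z])
      (auto simp: finite_fibre mem_fibre_self disjoint_bumps_def U_def)
  then show "P (b i) y * g y \<le> P g y"
    using b \<open>i \<in> ?Z\<close> g by (intro P_mult_le_if_isolated) (auto simp: disjoint_bumps_def)
qed

lemma alpha_eq_inverse_nat:
  assumes diag: "\<And>f. op_le (\<lambda>g. 0) (mult_op f) \<Longrightarrow> op_le (mult_op f) P \<Longrightarrow> norm f \<le> \<alpha>"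
  shows "\<exists>n::nat. n \<ge> 1 \<and> \<alpha> = 1 / real n"
proof -
  obtain x0 where max: "\<And>x. card (fibre x) \<le> card (fibre x0)"
    using exists_fibre_of_max_card by blast
  define Z where "Z = fibre x0"
  have Z: "finite Z" "x0 \<in> Z"
    by (simp_all add: Z_def finite_fibre mem_fibre_self)
  obtain b where b: "disjoint_bumps Z b"
    using disjoint_bumps_exist[OF compact_UNIV Z(1)] .
  have bump_le: "P (b i) x0 \<le> \<alpha>" if i: "i \<in> Z" for i
  proof -
    obtain U where "open U" "i \<in> U" "\<And>y g. y \<in> U \<Longrightarrow> nonneg_fun g \<Longrightarrow> P (b i) y * g y \<le> P g y"
      by (rule bump_locally_dominated[OF max b[unfolded Z_def] i[unfolded Z_def]]) blast
    then obtain f where "op_le (\<lambda>g. 0) (mult_op f)" "op_le (mult_op f) P" "P (b i) i \<le> f i"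
      by (rule mult_op_below_P_exists)
    moreover have "f i \<le> norm f"
      using norm_bounded[of f i] by simp
    ultimately have "P (b i) i \<le> \<alpha>"
      using diag by fastforce
    then show ?thesis
      using i by (simp add: Z_def P_eq_on_fibre)
  qed
  have "P (sum b Z) x0 = P (const_bcontfun 1) x0"
  proof (rule P_eq_if_eq_on_fibre)
    fix u assume "u \<in> fibre x0"
    then show "sum b Z u = const_bcontfun 1 u"
      using sum_disjoint_bumps_eq_one[OF Z(1) b] by (simp add: Z_def sum_apply_bcontfun)
  qed
  then have "1 = (\<Sum>i\<in>Z. P (b i) x0)"
    by (simp add: unital P_sum sum_apply_bcontfun)
  also have "\<dots> \<le> real (card Z) * \<alpha>"
    using sum_bounded_above[of Z "\<lambda>i. P (b i) x0" \<alpha>] bump_le by simp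
  finally have "real (card Z) * \<alpha> = 1"
    using card_mult_alpha_le_one[of Z x0] Z(1) by (simp add: Z_def)
  moreover have "card Z \<ge> 1"
    using Z by (simp add: Suc_le_eq card_gt_0_iff) blast
  ultimately show ?thesis
    by (intro exI[of _ "card Z"]) (simp add: field_simps)
qed

end

theorem theorem2p1:
  fixes P :: "('a::t2_space \<Rightarrow>\<^sub>C real) \<Rightarrow> ('a \<Rightarrow>\<^sub>C real)"
    and \<alpha> :: real
  assumes "compact (UNIV :: 'a set)"
    and "linear P"
    and "\<And>f. P (P f) = P f"
    and "positive_op P"
    and "P (const_bcontfun 1) = const_bcontfun 1"
    and "\<alpha> \<ge> 0"
    and "op_le (\<lambda>g. \<alpha> *\<^sub>R g) P"
    and "\<And>f. op_le (\<lambda>g. 0) (mult_op f) \<Longrightarrow> op_le (mult_op f) P \<Longrightarrow> norm f \<le> \<alpha>"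
  shows "\<alpha> = 0 \<or> (\<exists>n::nat. n \<ge> 1 \<and> \<alpha> = 1 / real n)"
proof (cases "\<alpha> = 0")
  case False
  with assms have "lower_bounded_projection P \<alpha>"
    by (intro lower_bounded_projection.intro positive_unital_projection.intro
        lower_bounded_projection_axioms.intro) auto
  then show ?thesis
    using lower_bounded_projection.alpha_eq_inverse_nat assms(8) by blast
qed simp

end
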